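(* Let $d$ be a positive integer and let $n,m$ be such that $T_{n,m}$ is nonempty. Then the set of all $d$-locally most reliable two-terminal graphs near $1$ in $T_{n,m}$ is nonempty and equals $T_{n,m}^d(m)$.
   Context: All graphs are finite, simple and undirected. A two-terminal graph is a graph $G$ together with two distinguished vertices $s,t$ (the terminals). Two two-terminal graphs are isomorphic if there is a graph isomorphism between them mapping the set of terminals onto the set of terminals. $T_{n,m}$ denotes the set of all pairwise nonisomorphic two-terminal graphs with $n$ vertices and $m$ edges. For a positive integer $d$, a $d$-pathset of a two-terminal graph $G$ is a spanning subgraph of $G$ containing a path of length (number of edges) at most $d$ joining $s$ and $t$; $N_i^d(G)$ is the number of $d$-pathsets of $G$ with exactly $i$ edges. For $\rho\in[0,1]$, $R_G^d(\rho)$ is the probability that the random spanning subgraph obtained from $G$ by deleting each edge independently with probability $\rho$ is a $d$-pathset; equivalently $R_G^d(\rho)=\sum_{i=1}^m N_i^d(G)(1-\rho)^i\rho^{m-i}$. $G\in T_{n,m}$ is a $d$-locally most reliable two-terminal graph near $1$ if there exists $\delta>0$ such that $R_G^d(\rho)\geq R_H^d(\rho)$ for every $H\in T_{n,m}$ and every $\rho\in(1-\delta,1)$. Define $T_{n,m}^d(0)=T_{n,m}$ and, for $i\in\{0,1,\ldots,m-1\}$, $T_{n,m}^d(i+1)=\{G\in T_{n,m}^d(i): N_{i+1}^d(G)\geq N_{i+1}^d(H)\text{ for all }H\in T_{n,m}^d(i)\}$. *)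

theory Defs
  imports Complex_Main
begin

type_synonym 'a ttg = "'a set \<times> 'a set set \<times> 'a \<times> 'a"

definition verts :: "'a ttg \<Rightarrow> 'a set" where "verts G = fst G"
definition edges :: "'a ttg \<Rightarrow> 'a set set" where "edges G = fst (snd G)"
definition src :: "'a ttg \<Rightarrow> 'a" where "src G = fst (snd (snd G))"
definition tgt :: "'a ttg \<Rightarrow> 'a" where "tgt G = snd (snd (snd G))"

definition is_ttg :: "'a ttg \<Rightarrow> bool" where
  "is_ttg G \<longleftrightarrow> finite (verts G)
     \<and> (\<forall>e\<in>edges G. \<exists>u v. u \<in> verts G \<and> v \<in> verts G \<and> u \<noteq> v \<and> e = {u, v})
     \<and> src G \<in> verts G \<and> tgt G \<in> verts G \<and> src G \<noteq> tgt G"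

definition ttg_iso :: "'a ttg \<Rightarrow> 'b ttg \<Rightarrow> bool" where
  "ttg_iso G H \<longleftrightarrow> (\<exists>f. bij_betw f (verts G) (verts H)
     \<and> (\<forall>u\<in>verts G. \<forall>v\<in>verts G. {u, v} \<in> edges G \<longleftrightarrow> {f u, f v} \<in> edges H)
     \<and> f ` {src G, tgt G} = {src H, tgt H})"

definition ttg_nm :: "nat \<Rightarrow> nat \<Rightarrow> 'a ttg \<Rightarrow> bool" where
  "ttg_nm n m G \<longleftrightarrow> is_ttg G \<and> card (verts G) = n \<and> card (edges G) = m"

definition is_T :: "nat \<Rightarrow> nat \<Rightarrow> 'a ttg set \<Rightarrow> bool" where
  "is_T n m T \<longleftrightarrow> (\<forall>G\<in>T. ttg_nm n m G)
     \<and> (\<forall>G\<in>T. \<forall>H\<in>T. ttg_iso G H \<longrightarrow> G = H)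
     \<and> (\<forall>G::'a ttg. ttg_nm n m G \<longrightarrow> (\<exists>H\<in>T. ttg_iso G H))"

text \<open>F (a set of edges of G, i.e. a spanning subgraph) contains a path of length
  (number of edges) at most d joining s and t.\<close>
definition is_path :: "'a set set \<Rightarrow> 'a list \<Rightarrow> 'a \<Rightarrow> 'a \<Rightarrow> bool" where
  "is_path F p u v \<longleftrightarrow> p \<noteq> [] \<and> hd p = u \<and> last p = v \<and> distinct p
     \<and> (\<forall>i. Suc i < length p \<longrightarrow> {p ! i, p ! Suc i} \<in> F)"

definition is_pathset :: "nat \<Rightarrow> 'a ttg \<Rightarrow> 'a set set \<Rightarrow> bool" where
  "is_pathset d G F \<longleftrightarrow> F \<subseteq> edges G
     \<and> (\<exists>p. is_path F p (src G) (tgt G) \<and> length p - 1 \<le> d)"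

definition Npath :: "nat \<Rightarrow> nat \<Rightarrow> 'a ttg \<Rightarrow> nat" where
  "Npath d i G = card {F. is_pathset d G F \<and> card F = i}"

definition Rel :: "nat \<Rightarrow> 'a ttg \<Rightarrow> real \<Rightarrow> real" where
  "Rel d G \<rho> = (\<Sum>i=1..card (edges G). real (Npath d i G) * (1 - \<rho>) ^ i * \<rho> ^ (card (edges G) - i))"

definition locally_most_reliable :: "nat \<Rightarrow> 'a ttg set \<Rightarrow> 'a ttg \<Rightarrow> bool" where
  "locally_most_reliable d T G \<longleftrightarrow> G \<in> T \<and>
     (\<exists>\<delta>>0. \<forall>H\<in>T. \<forall>\<rho>. 1 - \<delta> < \<rho> \<and> \<rho> < 1 \<longrightarrow> Rel d G \<rho> \<ge> Rel d H \<rho>)"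

fun Tseq :: "nat \<Rightarrow> 'a ttg set \<Rightarrow> nat \<Rightarrow> 'a ttg set" where
  "Tseq d T 0 = T"
| "Tseq d T (Suc i) = {G \<in> Tseq d T i. \<forall>H\<in>Tseq d T i. Npath d (Suc i) H \<le> Npath d (Suc i) G}"

end

theory Submission
  imports Defs "HOL-Library.FuncSet"
begin

text \<open>Near \<open>\<rho> = 1\<close> the reliability polynomial is dominated by its lowest-order
  nonvanishing term in \<open>1 - \<rho>\<close>, so comparing two graphs for \<open>\<rho>\<close> close to 1 amounts
  to comparing their sequences \<open>N\<^sub>1\<^sup>d, N\<^sub>2\<^sup>d, \<dots>, N\<^sub>m\<^sup>d\<close> lexicographically.  The sets
  \<open>T\<^sup>d(k)\<close> are exactly the lexicographic maxima of the first \<open>k\<close> terms, and since there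
  are only finitely many possible sequences, a lexicographic maximum beats every graph
  on a common interval \<open>(1 - \<delta>, 1)\<close>.\<close>

definition rel_sum :: "nat \<Rightarrow> (nat \<Rightarrow> real) \<Rightarrow> real \<Rightarrow> real" where
  "rel_sum m c \<rho> = (\<Sum>i=1..m. c i * (1 - \<rho>) ^ i * \<rho> ^ (m - i))"

lemma Rel_eq_rel_sum: "Rel d G = rel_sum (card (edges G)) (\<lambda>i. real (Npath d i G))"
  by (simp add: fun_eq_iff Rel_def rel_sum_def)

lemma rel_sum_cong: "(\<And>i. i \<in> {1..m} \<Longrightarrow> a i = b i) \<Longrightarrow> rel_sum m a = rel_sum m b"
  by (simp add: fun_eq_iff rel_sum_def)

lemma rel_sum_diff: "rel_sum m b \<rho> - rel_sum m a \<rho> = rel_sum m (\<lambda>i. b i - a i) \<rho>"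
  by (simp add: rel_sum_def sum_subtractf[symmetric] left_diff_distrib)

lemma rel_sum_eventually_pos:
  assumes j: "j \<in> {1..m}" and zero: "\<And>i. i \<in> {1..<j} \<Longrightarrow> c i = 0" and pos: "c j > 0"
  shows "eventually (\<lambda>\<rho>. rel_sum m c \<rho> > 0) (at_left 1)"
proof -
  define g where "g \<rho> = (\<Sum>i=j..m. c i * (1 - \<rho>) ^ (i - j) * \<rho> ^ (m - i))" for \<rho> :: real
  have factor: "rel_sum m c \<rho> = (1 - \<rho>) ^ j * g \<rho>" for \<rho>
  proof -
    have "{1..m} = {1..<j} \<union> {j..m}" using j by auto
    then have "rel_sum m c \<rho> = (\<Sum>i=j..m. c i * (1 - \<rho>) ^ i * \<rho> ^ (m - i))"
      by (simp add: rel_sum_def sum.union_disjoint ivl_disj_int zero)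
    also have "\<dots> = (\<Sum>i=j..m. (1 - \<rho>) ^ j * (c i * (1 - \<rho>) ^ (i - j) * \<rho> ^ (m - i)))"
      by (intro sum.cong refl) (simp add: power_add[symmetric])
    finally show ?thesis by (simp add: g_def sum_distrib_left)
  qed
  have "g 1 = c j"
  proof -
    have "g 1 = c j + (\<Sum>i\<in>{j..m}-{j}. c i * 0 ^ (i - j))"
      unfolding g_def using j by (subst sum.remove[of _ j]) auto
    also have "(\<Sum>i\<in>{j..m}-{j}. c i * 0 ^ (i - j)) = (0::real)"
      by (rule sum.neutral) auto
    finally show ?thesis by simp
  qed
  moreover have "isCont g 1" unfolding g_def by (intro continuous_intros)
  ultimately have "(g \<longlongrightarrow> c j) (at_left 1)"
    by (metis isCont_def filterlim_at_split)
  then have "eventually (\<lambda>\<rho>. g \<rho> > 0) (at_left 1)"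
    using pos by (rule order_tendstoD(1))
  moreover have "eventually (\<lambda>\<rho>. \<rho> < (1::real)) (at_left 1)"
    by (simp add: eventually_at_filter)
  ultimately show ?thesis
    by eventually_elim (simp add: factor)
qed

lemma rel_sum_eventually_less:
  assumes "j \<in> {1..m}" "\<And>i. i \<in> {1..<j} \<Longrightarrow> a i = b i" "a j < b j"
  shows "eventually (\<lambda>\<rho>. rel_sum m a \<rho> < rel_sum m b \<rho>) (at_left 1)"
  using rel_sum_eventually_pos[of j m "\<lambda>i. b i - a i"] assms
  by (simp add: rel_sum_diff[symmetric])

text \<open>Lexicographic order on \<open>(a 1, \<dots>, a k)\<close>, phrased without naming the first
  index at which \<open>a\<close> and \<open>b\<close> differ.\<close>

definition lex_ge :: "nat \<Rightarrow> (nat \<Rightarrow> 'a::linorder) \<Rightarrow> (nat \<Rightarrow> 'a) \<Rightarrow> bool" where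
  "lex_ge k a b \<longleftrightarrow> (\<forall>j\<in>{1..k}. (\<forall>i\<in>{1..<j}. a i = b i) \<longrightarrow> b j \<le> a j)"

lemma lex_ge_Suc:
  "lex_ge (Suc k) a b \<longleftrightarrow> lex_ge k a b \<and> ((\<forall>i\<in>{1..k}. a i = b i) \<longrightarrow> b (Suc k) \<le> a (Suc k))"
proof -
  have "{1..Suc k} = insert (Suc k) {1..k}" by auto
  then show ?thesis
    by (auto simp: lex_ge_def atLeastLessThanSuc_atLeastAtMost)
qed

lemma lex_ge_antisym: "lex_ge k a b \<Longrightarrow> lex_ge k b a \<Longrightarrow> \<forall>i\<in>{1..k}. a i = b i"
proof (induction k)
  case 0
  then show ?case by simp
next
  case (Suc k)
  from Suc.prems have "lex_ge k a b" "lex_ge k b a" by (simp_all add: lex_ge_Suc)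
  then have prefix: "\<forall>i\<in>{1..k}. a i = b i" by (rule Suc.IH)
  with Suc.prems have "a (Suc k) = b (Suc k)" by (simp add: lex_ge_Suc order.antisym)
  with prefix show ?case by (auto simp: le_Suc_eq)
qed

lemma lex_ge_cong_left: "lex_ge k a b \<Longrightarrow> \<forall>i\<in>{1..k}. a i = a' i \<Longrightarrow> lex_ge k a' b"
  unfolding lex_ge_def by force

lemma not_lex_ge:
  "\<not> lex_ge k a b \<longleftrightarrow> (\<exists>j\<in>{1..k}. (\<forall>i\<in>{1..<j}. a i = b i) \<and> a j < b j)"
  by (auto simp: lex_ge_def not_le)

lemma Tseq_eq_lex_maximal:
  "Tseq d T k = {G \<in> T. \<forall>H\<in>T. lex_ge k (\<lambda>i. Npath d i G) (\<lambda>i. Npath d i H)}"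
proof (induction k)
  case 0
  show ?case by (simp add: lex_ge_def)
next
  case (Suc k)
  let ?N = "\<lambda>G i. Npath d i G"
  have same_class: "H \<in> Tseq d T k \<longleftrightarrow> H \<in> T \<and> (\<forall>i\<in>{1..k}. ?N G i = ?N H i)"
    if "G \<in> Tseq d T k" for G H
  proof -
    from that have G: "G \<in> T" "\<forall>H\<in>T. lex_ge k (?N G) (?N H)" by (simp_all add: Suc.IH)
    show ?thesis
    proof
      assume "H \<in> Tseq d T k"
      then have "H \<in> T" "\<forall>H'\<in>T. lex_ge k (?N H) (?N H')" by (simp_all add: Suc.IH)
      with G have "lex_ge k (?N G) (?N H)" "lex_ge k (?N H) (?N G)" by simp_all
      with \<open>H \<in> T\<close> show "H \<in> T \<and> (\<forall>i\<in>{1..k}. ?N G i = ?N H i)"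
        using lex_ge_antisym by blast
    next
      assume H: "H \<in> T \<and> (\<forall>i\<in>{1..k}. ?N G i = ?N H i)"
      then have "\<forall>H'\<in>T. lex_ge k (?N H) (?N H')"
        using G(2) by (blast intro: lex_ge_cong_left)
      with H show "H \<in> Tseq d T k" by (simp add: Suc.IH)
    qed
  qed
  show ?case
  proof (rule set_eqI)
    fix G
    show "G \<in> Tseq d T (Suc k) \<longleftrightarrow>
      G \<in> {G \<in> T. \<forall>H\<in>T. lex_ge (Suc k) (?N G) (?N H)}"
    proof (cases "G \<in> Tseq d T k")
      case True
      then have G: "G \<in> T" "\<forall>H\<in>T. lex_ge k (?N G) (?N H)" by (simp_all add: Suc.IH)
      have "G \<in> Tseq d T (Suc k) \<longleftrightarrow> (\<forall>H\<in>Tseq d T k. ?N H (Suc k) \<le> ?N G (Suc k))"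
        using True by simp
      also have "\<dots> \<longleftrightarrow> (\<forall>H\<in>T. (\<forall>i\<in>{1..k}. ?N G i = ?N H i) \<longrightarrow> ?N H (Suc k) \<le> ?N G (Suc k))"
        using same_class[OF True] by blast
      also have "\<dots> \<longleftrightarrow> G \<in> {G \<in> T. \<forall>H\<in>T. lex_ge (Suc k) (?N G) (?N H)}"
        unfolding mem_Collect_eq lex_ge_Suc using G by blast
      finally show ?thesis .
    next
      case False
      then have "G \<notin> {G \<in> T. \<forall>H\<in>T. lex_ge (Suc k) (?N G) (?N H)}"
        unfolding Suc.IH mem_Collect_eq lex_ge_Suc by blast
      with False show ?thesis by simp
    qed
  qed
qed

lemma finite_edges:
  assumes "is_ttg G"
  shows "finite (edges G)"
proof (rule finite_subset)
  show "edges G \<subseteq> Pow (verts G)" using assms by (fastforce simp: is_ttg_def)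
  show "finite (Pow (verts G))" using assms by (simp add: is_ttg_def)
qed

lemma Npath_le: "is_ttg G \<Longrightarrow> Npath d i G \<le> 2 ^ card (edges G)"
proof -
  assume "is_ttg G"
  have "{F. is_pathset d G F \<and> card F = i} \<subseteq> Pow (edges G)"
    by (auto simp: is_pathset_def)
  then show ?thesis
    using finite_edges[OF \<open>is_ttg G\<close>] unfolding Npath_def
    by (metis card_Pow card_mono finite_Pow_iff)
qed

lemma is_T_ttg_nm: "is_T n m T \<Longrightarrow> G \<in> T \<Longrightarrow> ttg_nm n m G"
  unfolding is_T_def by blast

lemma Tseq_nonempty:
  assumes T: "is_T n m T" and "T \<noteq> {}"
  shows "Tseq d T k \<noteq> {}"
proof (induction k)
  case 0
  then show ?case using \<open>T \<noteq> {}\<close> by simp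
next
  case (Suc k)
  then obtain G0 where "G0 \<in> Tseq d T k" by blast
  moreover have "Npath d (Suc k) H < 2 ^ m + 1" if "H \<in> Tseq d T k" for H
  proof -
    have "H \<in> T" using that by (simp add: Tseq_eq_lex_maximal)
    then have "ttg_nm n m H" by (rule is_T_ttg_nm[OF T])
    then show ?thesis using Npath_le[of H d "Suc k"] by (simp add: ttg_nm_def)
  qed
  ultimately obtain G where "G \<in> Tseq d T k"
    "\<forall>H. H \<in> Tseq d T k \<longrightarrow> Npath d (Suc k) H \<le> Npath d (Suc k) G"
    using ex_has_greatest_nat[of "\<lambda>H. H \<in> Tseq d T k" G0 "Npath d (Suc k)"] by blast
  then show ?case by (simp only: Tseq.simps) blast
qed

lemma finite_Rel_image:
  assumes T: "is_T n m T"
  shows "finite (Rel d ` T)"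
proof (rule finite_subset)
  let ?C = "{1..m} \<rightarrow>\<^sub>E real ` {..2 ^ m}"
  show "Rel d ` T \<subseteq> rel_sum m ` ?C"
  proof
    fix R assume "R \<in> Rel d ` T"
    then obtain G where "G \<in> T" and R: "R = Rel d G" by blast
    have G: "ttg_nm n m G" using T \<open>G \<in> T\<close> by (rule is_T_ttg_nm)
    let ?c = "restrict (\<lambda>i. real (Npath d i G)) {1..m}"
    have "?c \<in> ?C" using G Npath_le[of G d] by (auto simp: ttg_nm_def)
    moreover have "R = rel_sum m ?c"
      using G by (auto simp: R ttg_nm_def Rel_eq_rel_sum intro: rel_sum_cong)
    ultimately show "R \<in> rel_sum m ` ?C" by blast
  qed
  show "finite (rel_sum m ` ?C)"
    by (intro finite_imageI finite_PiE) auto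
qed

lemma locally_most_reliable_iff_eventually:
  "locally_most_reliable d T G \<longleftrightarrow>
     G \<in> T \<and> eventually (\<lambda>\<rho>. \<forall>H\<in>T. Rel d H \<rho> \<le> Rel d G \<rho>) (at_left 1)"
proof -
  let ?P = "\<lambda>\<rho>. \<forall>H\<in>T. Rel d H \<rho> \<le> Rel d G \<rho>"
  have "(\<exists>\<delta>>0. \<forall>H\<in>T. \<forall>\<rho>. 1 - \<delta> < \<rho> \<and> \<rho> < 1 \<longrightarrow> Rel d H \<rho> \<le> Rel d G \<rho>)
      \<longleftrightarrow> (\<exists>\<delta>>0. \<forall>\<rho>. 1 - \<delta> < \<rho> \<and> \<rho> < 1 \<longrightarrow> ?P \<rho>)"
    by blast
  also have "\<dots> \<longleftrightarrow> (\<exists>b<1. \<forall>\<rho>>b. \<rho> < 1 \<longrightarrow> ?P \<rho>)"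
  proof
    assume "\<exists>\<delta>>0. \<forall>\<rho>. 1 - \<delta> < \<rho> \<and> \<rho> < 1 \<longrightarrow> ?P \<rho>"
    then obtain \<delta> :: real where "\<delta> > 0" "\<forall>\<rho>. 1 - \<delta> < \<rho> \<and> \<rho> < 1 \<longrightarrow> ?P \<rho>" by blast
    then show "\<exists>b<1. \<forall>\<rho>>b. \<rho> < 1 \<longrightarrow> ?P \<rho>" by (intro exI[of _ "1 - \<delta>"]) simp
  next
    assume "\<exists>b<1. \<forall>\<rho>>b. \<rho> < 1 \<longrightarrow> ?P \<rho>"
    then obtain b :: real where "b < 1" "\<forall>\<rho>>b. \<rho> < 1 \<longrightarrow> ?P \<rho>" by blast
    then show "\<exists>\<delta>>0. \<forall>\<rho>. 1 - \<delta> < \<rho> \<and> \<rho> < 1 \<longrightarrow> ?P \<rho>" by (intro exI[of _ "1 - b"]) simp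
  qed
  finally show ?thesis
    by (simp only: locally_most_reliable_def eventually_at_left_field)
qed

lemma locally_most_reliable_iff_lex_maximal:
  assumes T: "is_T n m T" and G: "G \<in> T"
  shows "locally_most_reliable d T G \<longleftrightarrow> (\<forall>H\<in>T. lex_ge m (\<lambda>i. Npath d i G) (\<lambda>i. Npath d i H))"
proof -
  let ?N = "\<lambda>G i. Npath d i G"
  have Rel_T: "Rel d H = rel_sum m (\<lambda>i. real (?N H i))" if "H \<in> T" for H
    using is_T_ttg_nm[OF T that] by (simp add: ttg_nm_def Rel_eq_rel_sum)
  have less_if_not_lex_ge:
    "eventually (\<lambda>\<rho>. Rel d H \<rho> < Rel d H' \<rho>) (at_left 1)"
    if HH': "H \<in> T" "H' \<in> T" and not_ge: "\<not> lex_ge m (?N H) (?N H')" for H H'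
  proof -
    obtain j where "j \<in> {1..m}" "\<forall>i\<in>{1..<j}. ?N H i = ?N H' i" "?N H j < ?N H' j"
      using not_ge by (auto simp: not_lex_ge)
    then have "eventually (\<lambda>\<rho>. rel_sum m (\<lambda>i. real (?N H i)) \<rho> < rel_sum m (\<lambda>i. real (?N H' i)) \<rho>) (at_left 1)"
      by (intro rel_sum_eventually_less[of j]) auto
    then show ?thesis using HH' by (simp add: Rel_T)
  qed
  show ?thesis
  proof
    assume "locally_most_reliable d T G"
    then have above: "eventually (\<lambda>\<rho>. \<forall>H\<in>T. Rel d H \<rho> \<le> Rel d G \<rho>) (at_left 1)"
      by (simp add: locally_most_reliable_iff_eventually)
    show "\<forall>H\<in>T. lex_ge m (?N G) (?N H)"
    proof (rule ccontr)
      assume "\<not> (\<forall>H\<in>T. lex_ge m (?N G) (?N H))"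
      then obtain H where "H \<in> T" "\<not> lex_ge m (?N G) (?N H)" by blast
      with G have "eventually (\<lambda>\<rho>. Rel d G \<rho> < Rel d H \<rho>) (at_left 1)"
        by (rule less_if_not_lex_ge)
      with above have "eventually (\<lambda>_. False) (at_left (1::real))"
        by eventually_elim (use \<open>H \<in> T\<close> in force)
      then show False by simp
    qed
  next
    assume lex_max: "\<forall>H\<in>T. lex_ge m (?N G) (?N H)"
    have "eventually (\<lambda>\<rho>. Rel d H \<rho> \<le> Rel d G \<rho>) (at_left 1)" if H: "H \<in> T" for H
    proof (cases "lex_ge m (?N H) (?N G)")
      case True
      have "\<forall>i\<in>{1..m}. ?N H i = ?N G i"
        using lex_ge_antisym[OF True] lex_max H by blast
      then have "Rel d H = Rel d G"
        unfolding Rel_T[OF H] Rel_T[OF G] by (intro rel_sum_cong) simp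
      then show ?thesis by simp
    next
      case False
      with H G have "eventually (\<lambda>\<rho>. Rel d H \<rho> < Rel d G \<rho>) (at_left 1)"
        by (rule less_if_not_lex_ge)
      then show ?thesis by (rule eventually_mono) simp
    qed
    then have "\<forall>R\<in>Rel d ` T. eventually (\<lambda>\<rho>. R \<rho> \<le> Rel d G \<rho>) (at_left 1)" by blast
    then have "eventually (\<lambda>\<rho>. \<forall>R\<in>Rel d ` T. R \<rho> \<le> Rel d G \<rho>) (at_left 1)"
      by (rule eventually_ball_finite[OF finite_Rel_image[OF T]])
    then show "locally_most_reliable d T G"
      using G by (simp add: locally_most_reliable_iff_eventually)
  qed
qed

theorem lemma1:
  fixes d n m :: nat and T :: "nat ttg set"
  assumes "d > 0"
    and "is_T n m T"
    and "T \<noteq> {}"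
  shows "{G \<in> T. locally_most_reliable d T G} \<noteq> {}
       \<and> {G \<in> T. locally_most_reliable d T G} = Tseq d T m"
proof -
  have "{G \<in> T. locally_most_reliable d T G}
      = {G \<in> T. \<forall>H\<in>T. lex_ge m (\<lambda>i. Npath d i G) (\<lambda>i. Npath d i H)}"
    using locally_most_reliable_iff_lex_maximal[OF assms(2)] by blast
  also have "\<dots> = Tseq d T m"
    by (rule Tseq_eq_lex_maximal[symmetric])
  finally show ?thesis
    using Tseq_nonempty[OF assms(2,3)] by blast
qed

end
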